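(* Let $A$ be a synaptic algebra and let $p,q\in P$ be projections in generic position, i.e. $p\wedge q=p\wedge q^{\perp}=p^{\perp}\wedge q=p^{\perp}\wedge q^{\perp}=0$. Let $c:=(pqp+p^{\perp}q^{\perp}p^{\perp})^{1/2}$ and $s:=(pq^{\perp}p+p^{\perp}qp^{\perp})^{1/2}$, let $u$ be the symmetry of the polar decomposition of $p-q^{\perp}$ and $v$ the symmetry of the polar decomposition of $p-q$, and put $j:=uvp+pvu$. Then \[ q=c^{2}p+csj+s^{2}p^{\perp}, \] where $pqp=c^{2}p=pc^{2}$, $p^{\perp}qp^{\perp}=s^{2}p^{\perp}=p^{\perp}s^{2}$, $pqp^{\perp}+p^{\perp}qp=csj$, $c^{\circ}=s^{\circ}=1$, $j$ is a symmetry exchanging $p$ and $p^{\perp}$ (i.e. $jpj=p^{\perp}$), $cCs$, $cCj$, $sCj$, and $j\in CC(pqp^{\perp}+p^{\perp}qp)$.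
   Context: Synaptic algebra (Foulis): $R$ is a real linear associative algebra with unit $1$, and $A\subseteq R$ is a real linear subspace with $1\in A$. For $a,b\in A$ write $aCb$ iff $ab=ba$; $C(a):=\{b\in A: aCb\}$; $CC(a):=\{b\in A: bCd \text{ for all } d\in C(a)\}$. $A$ is a synaptic algebra with enveloping algebra $R$ iff: (SA1) $A$ is a partially ordered archimedean real linear space with positive cone $A^+$, $1$ is an order unit, and $\|\cdot\|$ is the corresponding order-unit norm; (SA2) $a\in A\Rightarrow a^2\in A^+$; (SA3) $a,b\in A^+\Rightarrow aba\in A^+$; (SA4) if $a\in A$, $b\in A^+$ and $aba=0$ then $ab=ba=0$; (SA5) if $a\in A^+$ there is $b\in A^+\cap CC(a)$ with $b^2=a$; (SA6) for $a\in A$ there is $p\in A$ with $p=p^2$ and, for all $b\in A$, $ab=0\Leftrightarrow pb=0$; (SA7) if $1\le a\in A$ there is $b\in A$ with $ab=ba=1$; (SA8) if $a,b\in A$, $a_1\le a_2\le\cdots$ are pairwise commuting elements of $C(b)$ and $\|a-a_n\|\to0$, then $a\in C(b)$. $A$ is nondegenerate ($1\ne0$). Products are computed in $R$. $P:=\{p\in A:p=p^2\}$ is the orthomodular lattice of projections (order inherited from $A$) with $p^{\perp}:=1-p$, meet $\wedge$, join $\vee$. For $0\le a$, $a^{1/2}$ is the unique positive square root in $A$, $|a|:=(a^2)^{1/2}$. The carrier $a^{\circ}$ of $a$ is the unique projection with $ab=0\Leftrightarrow a^{\circ}b=0$ for all $b\in A$. A symmetry is $u\in A$ with $u^2=1$.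 For $a\in A$, the signum $t$ of $a$ is the partial symmetry with $t^2=a^{\circ}$, $t\in CC(a)$, $a=|a|t=t|a|$; the symmetry of the polar decomposition of $a$ is $t+(a^{\circ})^{\perp}$. *)

theory Defs
  imports Main "HOL.Real_Vector_Spaces" Complex_Main
begin

text \<open>The enveloping algebra R is modelled by a type
 'r of class real_algebra_1 (real linear associative algebra with unit).
 A is a subset of 'r, K is the positive cone A^+ (a subset of A).\<close>

definition sa_le :: "'r::real_algebra_1 set \<Rightarrow> 'r \<Rightarrow> 'r \<Rightarrow> bool" where
  "sa_le K a b \<longleftrightarrow> b - a \<in> K"

definition commutes :: "'r::real_algebra_1 \<Rightarrow> 'r \<Rightarrow> bool" where
  "commutes a b \<longleftrightarrow> a * b = b * a"

definition Cset :: "'r::real_algebra_1 set \<Rightarrow> 'r \<Rightarrow> 'r set" where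
  "Cset A a = {b \<in> A. commutes a b}"

definition CCset :: "'r::real_algebra_1 set \<Rightarrow> 'r \<Rightarrow> 'r set" where
  "CCset A a = {b \<in> A. \<forall>d \<in> Cset A a. commutes b d}"

definition ou_norm :: "'r::real_algebra_1 set \<Rightarrow> 'r \<Rightarrow> real" where
  "ou_norm K a = Inf {l. 0 < l \<and> sa_le K (- of_real l) a \<and> sa_le K a (of_real l)}"

definition synaptic_algebra :: "'r::real_algebra_1 set \<Rightarrow> 'r set \<Rightarrow> bool" where
  "synaptic_algebra A K \<longleftrightarrow>
     \<comment> \<open>A is a real linear subspace of R containing 1\<close>
     0 \<in> A \<and> (\<forall>a\<in>A. \<forall>b\<in>A. a + b \<in> A) \<and> (\<forall>r. \<forall>a\<in>A. r *\<^sub>R a \<in> A) \<and> 1 \<in> A \<and>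
     \<comment> \<open>SA1: partially ordered archimedean real linear space, positive cone K, order unit 1\<close>
     K \<subseteq> A \<and> (\<forall>a\<in>K. \<forall>b\<in>K. a + b \<in> K) \<and> (\<forall>r\<ge>0. \<forall>a\<in>K. r *\<^sub>R a \<in> K) \<and>
     (\<forall>a\<in>K. - a \<in> K \<longrightarrow> a = 0) \<and>
     (\<forall>a\<in>A. \<forall>b\<in>A. (\<forall>n::nat. sa_le K (real n *\<^sub>R a) b) \<longrightarrow> sa_le K a 0) \<and>
     (\<forall>a\<in>A. \<exists>r::real. sa_le K a (r *\<^sub>R 1)) \<and>
     \<comment> \<open>SA2\<close>
     (\<forall>a\<in>A. a * a \<in> K) \<and>
     \<comment> \<open>SA3\<close>
     (\<forall>a\<in>K. \<forall>b\<in>K. a * b * a \<in> K) \<and>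
     \<comment> \<open>SA4\<close>
     (\<forall>a\<in>A. \<forall>b\<in>K. a * b * a = 0 \<longrightarrow> a * b = 0 \<and> b * a = 0) \<and>
     \<comment> \<open>SA5\<close>
     (\<forall>a\<in>K. \<exists>b\<in>K \<inter> CCset A a. b * b = a) \<and>
     \<comment> \<open>SA6\<close>
     (\<forall>a\<in>A. \<exists>p\<in>A. p * p = p \<and> (\<forall>b\<in>A. a * b = 0 \<longleftrightarrow> p * b = 0)) \<and>
     \<comment> \<open>SA7\<close>
     (\<forall>a\<in>A. sa_le K 1 a \<longrightarrow> (\<exists>b\<in>A. a * b = 1 \<and> b * a = 1)) \<and>
     \<comment> \<open>SA8\<close>
     (\<forall>a\<in>A. \<forall>b\<in>A. \<forall>x::nat \<Rightarrow> 'r.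
        (\<forall>n. x n \<in> Cset A b) \<and> (\<forall>n. sa_le K (x n) (x (Suc n))) \<and>
        (\<forall>m n. commutes (x m) (x n)) \<and> ((\<lambda>n. ou_norm K (a - x n)) \<longlonglongrightarrow> 0)
        \<longrightarrow> a \<in> Cset A b) \<and>
     \<comment> \<open>nondegenerate\<close>
     (1::'r) \<noteq> 0"

definition projections :: "'r::real_algebra_1 set \<Rightarrow> 'r set" where
  "projections A = {p \<in> A. p * p = p}"

definition orth :: "'r::real_algebra_1 \<Rightarrow> 'r" where
  "orth p = 1 - p"

definition is_proj_meet :: "'r::real_algebra_1 set \<Rightarrow> 'r set \<Rightarrow> 'r \<Rightarrow> 'r \<Rightarrow> 'r \<Rightarrow> bool" where
  "is_proj_meet A K p q r \<longleftrightarrow> r \<in> projections A \<and> sa_le K r p \<and> sa_le K r q \<and>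
     (\<forall>x\<in>projections A. sa_le K x p \<and> sa_le K x q \<longrightarrow> sa_le K x r)"

definition psqrt :: "'r::real_algebra_1 set \<Rightarrow> 'r \<Rightarrow> 'r" where
  "psqrt K a = (THE b. b \<in> K \<and> b * b = a)"

definition sabs :: "'r::real_algebra_1 set \<Rightarrow> 'r \<Rightarrow> 'r" where
  "sabs K a = psqrt K (a * a)"

definition carrier_of :: "'r::real_algebra_1 set \<Rightarrow> 'r \<Rightarrow> 'r" where
  "carrier_of A a = (THE p. p \<in> projections A \<and> (\<forall>b\<in>A. a * b = 0 \<longleftrightarrow> p * b = 0))"

definition signum :: "'r::real_algebra_1 set \<Rightarrow> 'r set \<Rightarrow> 'r \<Rightarrow> 'r" where
  "signum A K a = (THE t. t \<in> A \<and> t * t = carrier_of A a \<and> t \<in> CCset A a \<and>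
                        a = sabs K a * t \<and> a = t * sabs K a)"

definition polar_symmetry :: "'r::real_algebra_1 set \<Rightarrow> 'r set \<Rightarrow> 'r \<Rightarrow> 'r" where
  "polar_symmetry A K a = signum A K a + orth (carrier_of A a)"

end

theory Submission
  imports Defs
begin

text \<open>Put \<open>a = p - q\<^sup>\<perp>\<close> and \<open>b = p - q\<close>. For projections \<open>a\<^sup>2 + b\<^sup>2 = 1\<close> and
  \<open>a b = - b a\<close>, and generic position forces \<open>a\<close> and \<open>b\<close> to have carrier \<open>1\<close>.
  Hence \<open>c = |a|\<close>, \<open>s = |b|\<close> and the polar decompositions \<open>a = c u\<close>, \<open>b = s v\<close> have
  symmetries \<open>u\<close>, \<open>v\<close>; all of \<open>c, s, u, v\<close> commute with \<open>a\<^sup>2\<close>, so \<open>c\<close> and \<open>s\<close> commute with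
  \<open>u\<close>, \<open>v\<close> and \<open>p\<close>. As \<open>u\<close> commutes with \<open>a\<close> and anticommutes with \<open>b\<close>, it intertwines
  \<open>p\<close> with \<open>q\<close>; likewise \<open>v\<close> intertwines \<open>p\<close> with \<open>q\<^sup>\<perp>\<close>. A direct computation then shows
  that \<open>j = u v p + p v u\<close> is a symmetry with \<open>j p j = p\<^sup>\<perp>\<close> and that \<open>c s j\<close> is the
  off-diagonal part \<open>p q p\<^sup>\<perp> + p\<^sup>\<perp> q p\<close> of \<open>q\<close>, which yields the decomposition of \<open>q\<close>.
  Finally \<open>j\<close> is the polar factor of \<open>c s j\<close> and so lies in its bicommutant.\<close>

section \<open>Identities in rings\<close>

lemma idempotent_left: "(p::'a::semigroup_mult) * p = p \<Longrightarrow> p * (p * x) = p * x"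
  by (metis mult.assoc)

lemma commute_left: "(x::'a::semigroup_mult) * y = y * x \<Longrightarrow> x * (y * z) = y * (x * z)"
  by (metis mult.assoc)

lemma commute_imp_square_commute: "(x::'a::semigroup_mult) * d = d * x \<Longrightarrow> x * x * d = d * (x * x)"
  by (metis mult.assoc)

lemma commute_palindrome:
  fixes x a b c :: "'a::semiring"
  assumes "x * a = a * x" "x * b = b * x" "x * c = c * x"
  shows "x * (a * b * c + c * b * a) = (a * b * c + c * b * a) * x"
  using assms by (simp add: distrib_left distrib_right mult.assoc commute_left)

lemma add_self_cancel: "(x::'a::real_vector) + x = y + y \<Longrightarrow> x = y"
  by (metis scaleR_2 scaleR_cancel_left zero_neq_numeral)

lemma intertwine_of_anticommute:
  fixes p q u :: "'a::real_algebra_1"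
  assumes "u * (p - (1-q)) = (p - (1-q)) * u" and "u * (p - q) = - ((p - q) * u)"
  shows "u * p = q * u"
proof -
  have "u * (p - (1-q)) + u * (p - q) = (p - (1-q)) * u - (p - q) * u"
    using assms by simp
  then have "u * p + u * p = q * u + q * u" by (simp add: algebra_simps)
  then show ?thesis by (rule add_self_cancel)
qed

context
  fixes p q :: "'a::ring_1"
  assumes pp: "p * p = p" and qq: "q * q = q"
begin

private lemmas idempotent_simps = pp qq idempotent_left[OF pp] idempotent_left[OF qq]

lemma square_diff_orth: "(p - (1-q)) * (p - (1-q)) = p * q * p + (1-p) * (1-q) * (1-p)"
  by (simp add: algebra_simps idempotent_simps)

lemma square_diff: "(p - q) * (p - q) = p * (1-q) * p + (1-p) * q * (1-p)"
  by (simp add: algebra_simps idempotent_simps)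

lemma square_diff_orth_add_square_diff: "(p - (1-q)) * (p - (1-q)) + (p - q) * (p - q) = 1"
  by (simp add: algebra_simps idempotent_simps)

lemma diff_orth_diff_anticommute: "(p - (1-q)) * (p - q) = - ((p - q) * (p - (1-q)))"
  by (simp add: algebra_simps idempotent_simps)

lemma square_diff_orth_compress:
  "(p - (1-q)) * (p - (1-q)) * p = p * q * p" "p * ((p - (1-q)) * (p - (1-q))) = p * q * p"
  by (simp_all add: algebra_simps idempotent_simps)

lemma square_diff_compress:
  "(p - q) * (p - q) * (1-p) = (1-p) * q * (1-p)" "(1-p) * ((p - q) * (p - q)) = (1-p) * q * (1-p)"
  by (simp_all add: algebra_simps idempotent_simps)

lemma square_diff_commute: "(p - q) * (p - q) * p = p * ((p - q) * (p - q))"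
  by (simp add: algebra_simps idempotent_simps)

lemma square_diff_commute_iff:
  "(p - q) * (p - q) * d = d * ((p - q) * (p - q)) \<longleftrightarrow>
   (p - (1-q)) * (p - (1-q)) * d = d * ((p - (1-q)) * (p - (1-q)))"
proof -
  have "(p - (1-q)) * (p - (1-q)) = 1 - (p - q) * (p - q)"
    using square_diff_orth_add_square_diff by (simp add: algebra_simps)
  moreover have "(1 - y) * d = d * (1 - y) \<longleftrightarrow> y * d = d * y" for y
    by (auto simp: algebra_simps)
  ultimately show ?thesis by simp
qed

lemma off_diagonal_part: "p * q * (1-p) + (1-p) * q * p = q - p * q * p - (1-p) * q * (1-p)"
  by (simp add: algebra_simps idempotent_simps)

lemma exchange_symmetry:
  fixes u v :: 'a
  assumes uu: "u * u = 1" and vv: "v * v = 1" and up: "u * p = q * u" and vp: "v * p = (1-q) * v"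
  shows "(u*v*p + p*v*u) * (u*v*p + p*v*u) = 1"
    and "(u*v*p + p*v*u) * p * (u*v*p + p*v*u) = 1 - p"
proof -
  have uq: "u * q = p * u" using up uu by (metis mult.assoc mult_1_left mult_1_right)
  have vq: "v * q = (1-p) * v"
  proof -
    have "p * v = v * (v * p * v)" using vv by (simp add: mult.assoc[symmetric])
    also have "\<dots> = v * ((1-q) * (v * v))" unfolding vp by (simp add: mult.assoc)
    finally show ?thesis using vv by (simp add: algebra_simps)
  qed
  have inv: "u * (u * x) = x" "v * (v * x) = x" for x
    using uu vv by (metis mult.assoc mult_1_left)+
  have swap: "u * (p * x) = q * (u * x)" "u * (q * x) = p * (u * x)"
    "v * (p * x) = (1-q) * (v * x)" "v * (q * x) = (1-p) * (v * x)" for x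
    using up uq vp vq by (metis mult.assoc)+
  note rules = inv swap idempotent_simps uu vv up vp uq vq
  show "(u*v*p + p*v*u) * (u*v*p + p*v*u) = 1"
    by (simp add: algebra_simps rules)
  show "(u*v*p + p*v*u) * p * (u*v*p + p*v*u) = 1 - p"
    by (simp add: algebra_simps rules)
qed

lemma polar_factors_off_diagonal:
  fixes c s u v :: 'a
  assumes cu: "c * u = p - (1-q)" and sv: "s * v = p - q"
    and cs: "c * s = s * c" and cv: "c * v = v * c" and cp: "c * p = p * c"
    and su: "s * u = u * s" and sp: "s * p = p * s"
  shows "c * s * (u*v*p + p*v*u) = p * q * (1-p) + (1-p) * q * p"
proof -
  have "c * s * (u * v * p) = (c * u) * (s * v) * p"
    by (simp add: mult.assoc commute_left[OF su])
  moreover have "c * s * (p * v * u) = p * (s * v) * (c * u)"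
    by (simp add: mult.assoc commute_left[OF cp] commute_left[OF sp] commute_left[OF cv]
        commute_left[OF cs])
  ultimately have "c * s * (u*v*p + p*v*u) = (p - (1-q)) * (p - q) * p + p * (p - q) * (p - (1-q))"
    unfolding cu sv by (simp add: distrib_left)
  also have "\<dots> = p * q * (1-p) + (1-p) * q * p" by (simp add: algebra_simps idempotent_simps)
  finally show ?thesis .
qed

end

section \<open>Synaptic algebras\<close>

locale synaptic =
  fixes A K :: "'r::real_algebra_1 set"
  assumes synaptic: "synaptic_algebra A K"
begin

lemma synaptic_algebraD:
  "\<forall>a\<in>A. \<forall>b\<in>A. a + b \<in> A" "\<forall>r. \<forall>a\<in>A. r *\<^sub>R a \<in> A" "1 \<in> A" "K \<subseteq> A"
  "\<forall>a\<in>K. - a \<in> K \<longrightarrow> a = 0" "\<forall>a\<in>A. a * a \<in> K" "\<forall>a\<in>K. \<forall>b\<in>K. a * b * a \<in> K"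
  "\<forall>a\<in>A. \<forall>b\<in>K. a * b * a = 0 \<longrightarrow> a * b = 0 \<and> b * a = 0"
  "\<forall>a\<in>K. \<exists>b\<in>K \<inter> CCset A a. b * b = a"
  "\<forall>a\<in>A. \<exists>p\<in>A. p * p = p \<and> (\<forall>b\<in>A. a * b = 0 \<longleftrightarrow> p * b = 0)"
  by (insert synaptic, unfold synaptic_algebra_def, (elim conjE, assumption)+)

lemma add_mem: "a \<in> A \<Longrightarrow> b \<in> A \<Longrightarrow> a + b \<in> A"
  using synaptic_algebraD(1) by blast

lemma scaleR_mem: "a \<in> A \<Longrightarrow> r *\<^sub>R a \<in> A"
  using synaptic_algebraD(2) by blast

lemma one_mem: "1 \<in> A"
  using synaptic_algebraD(3) .

lemma pos_mem: "a \<in> K \<Longrightarrow> a \<in> A"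
  using synaptic_algebraD(4) by blast

lemma pos_antisym: "a \<in> K \<Longrightarrow> - a \<in> K \<Longrightarrow> a = 0"
  using synaptic_algebraD(5) by blast

lemma square_pos: "a \<in> A \<Longrightarrow> a * a \<in> K"
  using synaptic_algebraD(6) by blast

lemma triple_pos: "a \<in> K \<Longrightarrow> b \<in> K \<Longrightarrow> a * b * a \<in> K"
  using synaptic_algebraD(7) by blast

lemma triple_eq_zero_imp_mult_eq_zero: "a \<in> A \<Longrightarrow> b \<in> K \<Longrightarrow> a * b * a = 0 \<Longrightarrow> a * b = 0"
  using synaptic_algebraD(8) by blast

lemma uminus_mem: "a \<in> A \<Longrightarrow> - a \<in> A"
  using scaleR_mem[of a "-1"] by simp

lemma diff_mem: "a \<in> A \<Longrightarrow> b \<in> A \<Longrightarrow> a - b \<in> A"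
  using add_mem[of a "- b"] uminus_mem[of b] by simp

lemma double_mem_imp_mem: "x + x \<in> A \<Longrightarrow> x \<in> A"
  using scaleR_mem[of "x + x" "1/2"] by (simp add: scaleR_2[symmetric])

lemma square_mem: "a \<in> A \<Longrightarrow> a * a \<in> A"
  using square_pos pos_mem by blast

lemma jordan_mem: "a \<in> A \<Longrightarrow> b \<in> A \<Longrightarrow> a * b + b * a \<in> A"
proof -
  assume "a \<in> A" "b \<in> A"
  then have "(a + b) * (a + b) - a * a - b * b \<in> A"
    by (intro diff_mem square_mem add_mem)
  then show ?thesis by (simp add: algebra_simps)
qed

lemma triple_mem: "a \<in> A \<Longrightarrow> b \<in> A \<Longrightarrow> a * b * a \<in> A"
proof -
  assume "a \<in> A" "b \<in> A"
  then have "a * (a * b + b * a) + (a * b + b * a) * a - (a * a * b + b * (a * a)) \<in> A"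
    by (intro diff_mem jordan_mem square_mem)
  then have "a * b * a + a * b * a \<in> A" by (simp add: algebra_simps)
  then show ?thesis by (rule double_mem_imp_mem)
qed

lemma commuting_mult_mem: "a \<in> A \<Longrightarrow> b \<in> A \<Longrightarrow> a * b = b * a \<Longrightarrow> a * b \<in> A"
  using jordan_mem[of a b] double_mem_imp_mem[of "a * b"] by simp

lemma one_pos: "1 \<in> K"
  using square_pos[OF one_mem] by simp

lemma idempotent_pos: "e \<in> A \<Longrightarrow> e * e = e \<Longrightarrow> e \<in> K"
  using square_pos[of e] by simp

lemma square_eq_zero_imp_eq_zero: "a \<in> A \<Longrightarrow> a * a = 0 \<Longrightarrow> a = 0"
  using triple_eq_zero_imp_mult_eq_zero[of a 1] one_pos by simp

text \<open>\<open>d e - e d e = (1 - e) d e\<close> squares to zero, and it lies in \<open>A\<close> once \<open>e d e = e d\<close>.\<close>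
lemma idempotent_commuteI:
  assumes e: "e \<in> A" "e * e = e" and d: "d \<in> A" and ede: "e * d * e = e * d"
  shows "e * d = d * e"
proof -
  have "(e * d + d * e) - (e * d * e + e * d * e) \<in> A"
    using e d by (intro diff_mem add_mem jordan_mem triple_mem)
  moreover have "(e * d + d * e) - (e * d * e + e * d * e) = d * e - e * d * e"
    using ede by simp
  moreover have "(d * e - e * d * e) * (d * e - e * d * e) = 0"
    by (simp add: algebra_simps idempotent_left[OF e(2)])
  ultimately have "d * e = e * d * e"
    using square_eq_zero_imp_eq_zero by (metis eq_iff_diff_eq_0)
  with ede show ?thesis by simp
qed

section \<open>Carriers\<close>

text \<open>The projections provided by SA6; by \<open>carrier_of_eq\<close> there is exactly one.\<close>
definition is_carrier :: "'r \<Rightarrow> 'r \<Rightarrow> bool" where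
  "is_carrier a e \<longleftrightarrow> e \<in> A \<and> e * e = e \<and> (\<forall>b\<in>A. a * b = 0 \<longleftrightarrow> e * b = 0)"

lemma is_carrier_exists: "a \<in> A \<Longrightarrow> \<exists>e. is_carrier a e"
  using synaptic_algebraD(10) unfolding is_carrier_def by blast

lemma is_carrier_annihilates_complement:
  assumes "is_carrier a e" shows "a * (1 - e) = 0"
proof -
  have "e * (1 - e) = 0" "1 - e \<in> A"
    using assms diff_mem[OF one_mem] unfolding is_carrier_def by (auto simp: algebra_simps)
  then show ?thesis using assms unfolding is_carrier_def by blast
qed

lemma is_carrier_commutes:
  assumes e: "is_carrier a e" and d: "d \<in> A" "a * d = d * a"
  shows "e * d = d * e"
proof -
  have eA: "e \<in> A" and ee: "e * e = e" using e unfolding is_carrier_def by auto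
  have ae: "a * (1 - e) = 0" using is_carrier_annihilates_complement[OF e] .
  have "a * (d * (1 - e) + (1 - e) * d) = (a * d) * (1 - e) + a * (1 - e) * d"
    by (simp add: algebra_simps)
  also have "\<dots> = 0" using ae d(2) by (simp add: mult.assoc)
  finally have "a * (d * (1 - e) + (1 - e) * d) = 0" .
  moreover have "d * (1 - e) + (1 - e) * d \<in> A"
    using d(1) eA by (intro jordan_mem diff_mem one_mem)
  ultimately have "e * (d * (1 - e) + (1 - e) * d) = 0"
    using e unfolding is_carrier_def by blast
  then have "e * d * e = e * d"
    by (simp add: algebra_simps idempotent_left[OF ee] ee)
  then show ?thesis using idempotent_commuteI eA ee d(1) by blast
qed

lemma is_carrier_absorb:
  assumes e: "is_carrier a e" and a: "a \<in> A"
  shows "a * e = a" "e * a = a"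
proof -
  show ae: "a * e = a" using is_carrier_annihilates_complement[OF e] by (simp add: algebra_simps)
  show "e * a = a" using is_carrier_commutes[OF e a] ae by simp
qed

lemma carrier_of_eq:
  assumes e: "is_carrier a e" and a: "a \<in> A"
  shows "carrier_of A a = e"
  unfolding carrier_of_def
proof (rule the_equality)
  show "e \<in> projections A \<and> (\<forall>b\<in>A. a * b = 0 \<longleftrightarrow> e * b = 0)"
    using e unfolding is_carrier_def projections_def by blast
next
  fix f assume "f \<in> projections A \<and> (\<forall>b\<in>A. a * b = 0 \<longleftrightarrow> f * b = 0)"
  then have f: "is_carrier a f" unfolding is_carrier_def projections_def by blast
  have "e * f = f * e"
    using is_carrier_commutes[OF e] is_carrier_absorb[OF f a] f unfolding is_carrier_def by auto
  moreover have "e * (1 - f) = 0" "f * (1 - e) = 0"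
    using e f is_carrier_annihilates_complement diff_mem[OF one_mem]
    unfolding is_carrier_def by blast+
  ultimately show "f = e" by (simp add: algebra_simps)
qed

lemma carrier_eq_one_iff:
  assumes "a \<in> A" shows "carrier_of A a = 1 \<longleftrightarrow> (\<forall>b\<in>A. a * b = 0 \<longrightarrow> b = 0)"
proof
  assume "carrier_of A a = 1"
  moreover obtain e where e: "is_carrier a e" using is_carrier_exists[OF assms] ..
  ultimately have "is_carrier a 1" using carrier_of_eq[OF e assms] by simp
  then show "\<forall>b\<in>A. a * b = 0 \<longrightarrow> b = 0" unfolding is_carrier_def by simp
next
  assume "\<forall>b\<in>A. a * b = 0 \<longrightarrow> b = 0"
  then have "is_carrier a 1" using one_mem unfolding is_carrier_def by auto
  then show "carrier_of A a = 1" using carrier_of_eq[OF _ assms] by blast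
qed

lemma carrier_eq_oneD: "carrier_of A a = 1 \<Longrightarrow> a \<in> A \<Longrightarrow> b \<in> A \<Longrightarrow> a * b = 0 \<Longrightarrow> b = 0"
  using carrier_eq_one_iff by blast

lemma carrier_square_eq_one:
  assumes a: "a \<in> A" and a1: "carrier_of A a = 1"
  shows "carrier_of A (a * a) = 1"
proof -
  obtain e where e: "is_carrier (a * a) e" using is_carrier_exists square_mem[OF a] by blast
  have fA: "1 - e \<in> A" and ff: "(1 - e) * (1 - e) = 1 - e"
    using e diff_mem[OF one_mem] unfolding is_carrier_def by (auto simp: algebra_simps)
  have "e * a = a * e" using is_carrier_commutes[OF e a] by (simp add: mult.assoc)
  then have fa: "(1 - e) * a = a * (1 - e)" by (simp add: algebra_simps)
  have "(a * (1 - e)) * (a * (1 - e)) = a * a * ((1 - e) * (1 - e))"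
    by (simp add: mult.assoc commute_left[OF fa])
  also have "\<dots> = 0" using ff is_carrier_annihilates_complement[OF e] by simp
  finally have "a * (1 - e) = 0"
    using square_eq_zero_imp_eq_zero commuting_mult_mem[OF a fA fa[symmetric]] by blast
  then have "e = 1" using carrier_eq_oneD[OF a1 a fA] by simp
  then show ?thesis using carrier_of_eq[OF e square_mem[OF a]] by simp
qed

lemma carrier_eq_one_if_square_eq:
  assumes a: "a \<in> A" "carrier_of A a = 1" and c: "c \<in> A" "c * c = a * a"
  shows "carrier_of A c = 1"
  unfolding carrier_eq_one_iff[OF c(1)]
proof (intro ballI impI)
  fix b assume "b \<in> A" "c * b = 0"
  then have "a * a * b = 0" using c(2) by (metis mult.assoc mult_zero_right)
  then show "b = 0"
    using carrier_eq_oneD[OF carrier_square_eq_one[OF a] square_mem[OF a(1)] \<open>b \<in> A\<close>] by blast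
qed

section \<open>Square roots and polar decomposition\<close>

lemma pos_sqrt_commuting_exists:
  assumes "a \<in> K" shows "\<exists>b\<in>K. b * b = a \<and> (\<forall>d\<in>A. a * d = d * a \<longrightarrow> b * d = d * b)"
proof -
  obtain b where "b \<in> K" "b \<in> CCset A a" "b * b = a" using synaptic_algebraD(9) assms by blast
  then show ?thesis unfolding CCset_def Cset_def commutes_def by auto
qed

lemma commuting_triple_pos:
  assumes y: "y \<in> K" and x: "x \<in> A" and xy: "x * y = y * x"
  shows "x * y * x \<in> K"
proof -
  obtain h where h: "h \<in> K" "h * h = y" "\<forall>d\<in>A. y * d = d * y \<longrightarrow> h * d = d * h"
    using pos_sqrt_commuting_exists[OF y] by blast
  have hx: "h * x = x * h" using h(3) x xy by simp
  have "x * y * x = h * (x * x) * h"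
    unfolding h(2)[symmetric] by (simp add: mult.assoc commute_left[OF hx] hx)
  then show ?thesis using triple_pos[OF h(1) square_pos[OF x]] by simp
qed

lemma commuting_mult_pos:
  assumes c: "c \<in> K" and s: "s \<in> K" and cs: "c * s = s * c"
  shows "c * s \<in> K"
proof -
  obtain h where h: "h \<in> K" "h * h = c" "\<forall>d\<in>A. c * d = d * c \<longrightarrow> h * d = d * h"
    using pos_sqrt_commuting_exists[OF c] by blast
  have hs: "h * s = s * h" using h(3) pos_mem[OF s] cs by simp
  have "c * s = h * s * h" unfolding h(2)[symmetric] by (metis hs mult.assoc)
  then show ?thesis using triple_pos[OF h(1) s] by simp
qed

text \<open>With \<open>x = r - b\<close>, the two positive elements \<open>x r x\<close> and \<open>x b x\<close> add up to \<open>x (r + b) x = 0\<close>.\<close>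
lemma pos_sqrt_unique:
  assumes b: "b \<in> K" and r: "r \<in> K" "r * r = b * b"
    and rC: "\<forall>d\<in>A. b * b * d = d * (b * b) \<longrightarrow> r * d = d * r"
  shows "b = r"
proof -
  have bA: "b \<in> A" and rA: "r \<in> A" using b r pos_mem by auto
  have rb: "r * b = b * r" using rC bA by (simp add: mult.assoc)
  define x where "x = r - b"
  have xA: "x \<in> A" unfolding x_def using rA bA by (rule diff_mem)
  have xr: "x * r = r * x" and xb: "x * b = b * x" unfolding x_def using rb by (simp_all add: algebra_simps)
  have "x * (r + b) = 0" unfolding x_def using rb r(2) by (simp add: algebra_simps)
  then have sum: "x * r * x + x * b * x = 0" by (metis distrib_left distrib_right mult_zero_left)
  have "x * r * x \<in> K" "x * b * x \<in> K"
    using commuting_triple_pos r(1) b xA xr xb by blast+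
  moreover have "x * b * x = - (x * r * x)" using sum by (simp add: eq_neg_iff_add_eq_0 add.commute)
  ultimately have "x * r * x = 0" "x * b * x = 0" using pos_antisym by auto
  then have "x * r = 0" "x * b = 0" using triple_eq_zero_imp_mult_eq_zero xA r(1) b by blast+
  then have "x * x = 0" unfolding x_def by (simp add: right_diff_distrib)
  then have "x = 0" using square_eq_zero_imp_eq_zero xA by blast
  then show ?thesis unfolding x_def by simp
qed

lemma
  assumes "a \<in> K"
  shows psqrt_pos: "psqrt K a \<in> K"
    and psqrt_square: "psqrt K a * psqrt K a = a"
    and psqrt_commute: "\<And>d. d \<in> A \<Longrightarrow> a * d = d * a \<Longrightarrow> psqrt K a * d = d * psqrt K a"
proof -
  obtain r where r: "r \<in> K" "r * r = a" "\<forall>d\<in>A. a * d = d * a \<longrightarrow> r * d = d * r"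
    using pos_sqrt_commuting_exists[OF assms] by blast
  have "psqrt K a = r" unfolding psqrt_def
  proof (rule the_equality)
    fix b assume "b \<in> K \<and> b * b = a"
    then show "b = r" using pos_sqrt_unique[of b r] r by auto
  qed (use r in auto)
  then show "psqrt K a \<in> K" "psqrt K a * psqrt K a = a"
    "\<And>d. d \<in> A \<Longrightarrow> a * d = d * a \<Longrightarrow> psqrt K a * d = d * psqrt K a"
    using r by auto
qed

lemma psqrt_of_square:
  assumes b: "b \<in> K" shows "psqrt K (b * b) = b"
proof -
  have bb: "b * b \<in> K" using square_pos pos_mem b by blast
  show ?thesis
    using pos_sqrt_unique[OF b psqrt_pos[OF bb] psqrt_square[OF bb]] psqrt_commute[OF bb] by auto
qed

lemma
  assumes "a \<in> A"
  shows sabs_pos: "sabs K a \<in> K"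
    and sabs_square: "sabs K a * sabs K a = a * a"
    and sabs_commute: "\<And>d. d \<in> A \<Longrightarrow> a * d = d * a \<Longrightarrow> sabs K a * d = d * sabs K a"
proof -
  note aa = square_pos[OF assms]
  show "sabs K a \<in> K" "sabs K a * sabs K a = a * a"
    unfolding sabs_def using psqrt_pos[OF aa] psqrt_square[OF aa] by auto
  show "sabs K a * d = d * sabs K a" if "d \<in> A" "a * d = d * a" for d
    unfolding sabs_def using psqrt_commute[OF aa] that by (simp add: mult.assoc commute_left)
qed

lemma carriers_of_orthogonal:
  assumes x: "x \<in> A" and xy: "x * y = 0" "y * x = 0"
    and e: "is_carrier x e" and f: "is_carrier y f"
  shows "f * x = 0" "x * f = 0" "e * f = 0"
proof -
  show fx: "f * x = 0" using f x xy(2) unfolding is_carrier_def by blast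
  show xf: "x * f = 0" using is_carrier_commutes[OF f x] xy fx by simp
  show "e * f = 0" using e f xf unfolding is_carrier_def by blast
qed

text \<open>The polar factor is the difference of the carriers of \<open>|a| + a\<close> and \<open>|a| - a\<close>,
  two elements whose products vanish.\<close>
lemma polar_factor_exists:
  assumes a: "a \<in> A"
  shows "\<exists>t\<in>A. (\<forall>d\<in>A. a * d = d * a \<longrightarrow> t * d = d * t)
    \<and> sabs K a * t = a \<and> t * sabs K a = a \<and> a * (1 - t * t) = 0"
proof -
  define r where "r = sabs K a"
  have rA: "r \<in> A" unfolding r_def using sabs_pos[OF a] pos_mem by blast
  have ra: "r * a = a * r" unfolding r_def using sabs_commute[OF a a] by simp
  have rr: "r * r = a * a" unfolding r_def using sabs_square[OF a] .
  define x y where "x = r + a" and "y = r - a"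
  have xA: "x \<in> A" and yA: "y \<in> A" unfolding x_def y_def using rA a by (auto intro: add_mem diff_mem)
  have xy: "x * y = 0" and yx: "y * x = 0"
    unfolding x_def y_def using ra rr by (simp_all add: algebra_simps)
  obtain e f where e: "is_carrier x e" and f: "is_carrier y f"
    using is_carrier_exists xA yA by blast
  have eA: "e \<in> A" and ee: "e * e = e" and fA: "f \<in> A" and ff: "f * f = f"
    using e f unfolding is_carrier_def by auto
  note xf = carriers_of_orthogonal[OF xA xy yx e f] and ye = carriers_of_orthogonal[OF yA yx xy f e]
  note units = is_carrier_absorb[OF e xA] is_carrier_absorb[OF f yA]
  define t where "t = e - f"
  have rx: "r + r = x + y" and ax: "a + a = x - y" unfolding x_def y_def by simp_all
  have "(x + y) * t = x - y" "t * (x + y) = x - y" "(x - y) * (1 - t * t) = 0"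
    unfolding t_def using xf ye units ee ff by (simp_all add: algebra_simps)
  then have "(r + r) * t = a + a" "t * (r + r) = a + a" "(a + a) * (1 - t * t) = 0"
    by (simp_all only: rx ax)
  then have "r * t + r * t = a + a" "t * r + t * r = a + a"
    "a * (1 - t * t) + a * (1 - t * t) = 0"
    by (simp_all only: distrib_left distrib_right)
  then have rt: "r * t = a" and tr: "t * r = a" and at: "a * (1 - t * t) = 0"
    using add_self_cancel[of "a * (1 - t * t)" 0] by (auto dest: add_self_cancel)
  have "t * d = d * t" if d: "d \<in> A" "a * d = d * a" for d
  proof -
    have "r * d = d * r" unfolding r_def using sabs_commute[OF a d] .
    then have "x * d = d * x" "y * d = d * y" unfolding x_def y_def using d(2) by (simp_all add: algebra_simps)
    then show ?thesis unfolding t_def using is_carrier_commutes e f d(1) by (simp add: algebra_simps)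
  qed
  moreover have "t \<in> A" unfolding t_def using eA fA by (rule diff_mem)
  ultimately show ?thesis using rt tr at unfolding r_def by blast
qed

lemma
  assumes a: "a \<in> A" and a1: "carrier_of A a = 1"
  shows polar_symmetry_mem: "polar_symmetry A K a \<in> A"
    and polar_symmetry_square: "polar_symmetry A K a * polar_symmetry A K a = 1"
    and polar_symmetry_commute:
      "\<And>d. d \<in> A \<Longrightarrow> a * d = d * a \<Longrightarrow> polar_symmetry A K a * d = d * polar_symmetry A K a"
    and sabs_mult_polar_symmetry: "sabs K a * polar_symmetry A K a = a"
proof -
  obtain t where tA: "t \<in> A" and tC: "\<forall>d\<in>A. a * d = d * a \<longrightarrow> t * d = d * t"
    and rt: "sabs K a * t = a" and tr: "t * sabs K a = a" and at: "a * (1 - t * t) = 0"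
    using polar_factor_exists[OF a] by blast
  have tt: "t * t = 1"
    using carrier_eq_oneD[OF a1 a diff_mem[OF one_mem square_mem[OF tA]] at] by simp
  have "signum A K a = t" unfolding signum_def
  proof (rule the_equality)
    show "t \<in> A \<and> t * t = carrier_of A a \<and> t \<in> CCset A a \<and> a = sabs K a * t \<and> a = t * sabs K a"
      using tA tC tt a1 rt tr unfolding CCset_def Cset_def commutes_def by auto
  next
    fix t' assume t': "t' \<in> A \<and> t' * t' = carrier_of A a \<and> t' \<in> CCset A a
      \<and> a = sabs K a * t' \<and> a = t' * sabs K a"
    then have "a * (t' - t) = t' * sabs K a * (t' - t)" by simp
    also have "\<dots> = t' * (sabs K a * t' - sabs K a * t)" by (simp add: algebra_simps)
    also have "\<dots> = 0" using t' rt by simp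
    finally have "a * (t' - t) = 0" .
    moreover have "t' - t \<in> A" using t' tA by (blast intro: diff_mem)
    ultimately have "t' - t = 0" using carrier_eq_oneD[OF a1 a] by blast
    then show "t' = t" by simp
  qed
  moreover have "polar_symmetry A K a = signum A K a"
    unfolding polar_symmetry_def a1 orth_def by simp
  ultimately show "polar_symmetry A K a \<in> A" "polar_symmetry A K a * polar_symmetry A K a = 1"
    "\<And>d. d \<in> A \<Longrightarrow> a * d = d * a \<Longrightarrow> polar_symmetry A K a * d = d * polar_symmetry A K a"
    "sabs K a * polar_symmetry A K a = a"
    using tA tt tC rt by auto
qed

text \<open>The polar factor \<open>t\<close> of \<open>k = c s j\<close> lies in the bicommutant of \<open>k\<close> and
  satisfies \<open>c s t = k\<close>; since \<open>c\<close> and \<open>s\<close> have trivial annihilators, \<open>t = j\<close>.\<close>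
lemma symmetry_factor_in_bicommutant:
  assumes c: "c \<in> K" "carrier_of A c = 1" and s: "s \<in> K" "carrier_of A s = 1"
    and j: "j \<in> A" "j * j = 1" and cs: "c * s = s * c" and cj: "c * j = j * c" and sj: "s * j = j * s"
    and k: "c * s * j \<in> A"
  shows "j \<in> CCset A (c * s * j)"
proof -
  obtain t where tA: "t \<in> A" and tC: "\<forall>d\<in>A. c * s * j * d = d * (c * s * j) \<longrightarrow> t * d = d * t"
    and kt: "sabs K (c * s * j) * t = c * s * j"
    using polar_factor_exists[OF k] by blast
  have cA: "c \<in> A" and sA: "s \<in> A" using c s pos_mem by auto
  have jcs: "j * (c * s) = c * s * j" using cj sj by (metis mult.assoc)
  have "c * s * j * (c * s * j) = c * s * (j * (c * s)) * j" by (simp add: mult.assoc)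
  also have "\<dots> = c * s * (c * s) * (j * j)" unfolding jcs by (simp add: mult.assoc)
  finally have "c * s * j * (c * s * j) = c * s * (c * s) * (j * j)" .
  then have "sabs K (c * s * j) = c * s"
    unfolding sabs_def using j(2) psqrt_of_square[OF commuting_mult_pos[OF c(1) s(1) cs]] by simp
  with kt have cst: "c * s * t = c * s * j" by simp
  have "c * s * j * s = c * s * s * j" by (simp add: mult.assoc sj[symmetric])
  also have "\<dots> = s * (c * s * j)" using cs by (metis mult.assoc)
  finally have "c * s * j * s = s * (c * s * j)" .
  then have "t * s = s * t" using tC sA by blast
  then have "s * (t - j) = (t - j) * s" using sj by (simp add: algebra_simps)
  then have stjA: "s * (t - j) \<in> A" using commuting_mult_mem sA diff_mem[OF tA j(1)] by blast
  have "c * (s * (t - j)) = 0" using cst by (simp add: algebra_simps mult.assoc)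
  then have "s * (t - j) = 0" using carrier_eq_oneD[OF c(2) cA stjA] by blast
  then have "t = j" using carrier_eq_oneD[OF s(2) sA diff_mem[OF tA j(1)]] by simp
  then show ?thesis unfolding CCset_def Cset_def commutes_def using j(1) tC by auto
qed

section \<open>Projections in generic position\<close>

lemma projection_below_meet_eq_zero:
  assumes meet: "is_proj_meet A K x y 0" and x: "x \<in> A" "x * x = x" and y: "y \<in> A" "y * y = y"
    and r: "r \<in> A" "r * r = r" and rx: "x * r = r" "r * x = r" and ry: "y * r = r" "r * y = r"
  shows "r = 0"
proof -
  have le: "sa_le K r z" if "z \<in> A" "z * z = z" "z * r = r" "r * z = r" for z
  proof -
    have "(z - r) * (z - r) = z - r" using that r(2) by (simp add: algebra_simps)
    then show ?thesis unfolding sa_le_def using idempotent_pos diff_mem that(1) r(1) by blast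
  qed
  have "r \<in> projections A" unfolding projections_def using r by blast
  then have "sa_le K r 0" using meet le[OF x rx] le[OF y ry] unfolding is_proj_meet_def by blast
  then show ?thesis using pos_antisym idempotent_pos r unfolding sa_le_def by simp
qed

text \<open>The carrier \<open>e\<close> of \<open>p - q\<close> annihilates \<open>p (1 - e) + (1 - e) p\<close>, so that
  \<open>e p e = e p\<close>.\<close>
lemma carrier_of_diff_commutes:
  assumes p: "p \<in> A" "p * p = p" and q: "q \<in> A" "q * q = q" and e: "is_carrier (p - q) e"
  shows "e * p = p * e"
proof -
  have eA: "e \<in> A" and ee: "e * e = e" using e unfolding is_carrier_def by auto
  have af: "(p - q) * (1 - e) = 0" using is_carrier_annihilates_complement[OF e] .
  then have pf: "p * (1 - e) = q * (1 - e)" by (simp add: algebra_simps)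
  have "q * (p * (1 - e)) = p * (1 - e)" unfolding pf by (simp add: idempotent_left[OF q(2)])
  then have "(p - q) * (p * (1 - e) + (1 - e) * p) = (p - q) * (1 - e) * p"
    by (simp add: algebra_simps idempotent_left[OF p(2)] p(2))
  then have "(p - q) * (p * (1 - e) + (1 - e) * p) = 0" using af by simp
  moreover have "p * (1 - e) + (1 - e) * p \<in> A" using p(1) eA by (intro jordan_mem diff_mem one_mem)
  ultimately have "e * (p * (1 - e) + (1 - e) * p) = 0" using e unfolding is_carrier_def by blast
  then have "e * p * e = e * p" by (simp add: algebra_simps idempotent_left[OF ee] ee)
  then show ?thesis using idempotent_commuteI[OF eA ee p(1)] by simp
qed

text \<open>With \<open>f = 1 - (p - q)\<^sup>\<circ>\<close>, the product \<open>p f\<close> is a projection below \<open>p\<close> and \<open>q\<close>,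
  hence zero, and then \<open>f\<close> lies below \<open>1 - p\<close> and \<open>1 - q\<close>.\<close>
lemma carrier_of_diff_eq_one:
  assumes p: "p \<in> projections A" and q: "q \<in> projections A"
    and meet: "is_proj_meet A K p q 0" and meet_orth: "is_proj_meet A K (1 - p) (1 - q) 0"
  shows "carrier_of A (p - q) = 1"
proof -
  have pA: "p \<in> A" and pp: "p * p = p" and qA: "q \<in> A" and qq: "q * q = q"
    using p q unfolding projections_def by auto
  have aA: "p - q \<in> A" using pA qA by (rule diff_mem)
  obtain e where e: "is_carrier (p - q) e" using is_carrier_exists[OF aA] ..
  define f where "f = 1 - e"
  have fA: "f \<in> A" and ff: "f * f = f"
    using e diff_mem[OF one_mem] unfolding f_def is_carrier_def by (auto simp: algebra_simps)
  have pf: "p * f = q * f" and fp: "f * p = f * q"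
    using is_carrier_absorb[OF e aA] unfolding f_def by (simp_all add: algebra_simps)
  have fpc: "f * p = p * f" using carrier_of_diff_commutes[OF pA pp qA qq e] unfolding f_def
    by (simp add: algebra_simps)
  have pfA: "p * f \<in> A" using commuting_mult_mem[OF pA fA fpc[symmetric]] .
  have "p * f * (p * f) = p * f" "p * (p * f) = p * f" "p * f * p = p * f"
    by (simp_all add: mult.assoc commute_left[OF fpc] fpc idempotent_left pp ff)
  moreover have "q * (p * f) = p * f" "p * f * q = p * f"
    by (simp_all add: pf idempotent_left[OF qq] mult.assoc fp[symmetric] fpc idempotent_left[OF pp])
  ultimately have "p * f = 0" using projection_below_meet_eq_zero[OF meet pA pp qA qq pfA] by simp
  then have "f * p = 0" "q * f = 0" "f * q = 0" using fpc pf fp by simp_all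
  then have "f = 0"
    using projection_below_meet_eq_zero[OF meet_orth _ _ _ _ fA ff] pA qA pp qq
    by (simp add: algebra_simps diff_mem one_mem \<open>p * f = 0\<close>)
  then show ?thesis using carrier_of_eq[OF e aA] unfolding f_def by simp
qed

end

text \<open>Generic position of \<open>p\<close> and \<open>q\<close>, in the form delivered by
  \<open>carrier_of_diff_eq_one\<close>; \<open>1 - q\<close> stands for \<open>q\<^sup>\<perp>\<close>.\<close>
locale generic_position = synaptic A K for A K :: "'r::real_algebra_1 set" +
  fixes p q :: 'r
  assumes p_proj: "p \<in> projections A" and q_proj: "q \<in> projections A"
    and carrier_diff: "carrier_of A (p - q) = 1"
    and carrier_diff_orth: "carrier_of A (p - (1-q)) = 1"
begin

abbreviation c where "c \<equiv> psqrt K (p * q * p + (1-p) * (1-q) * (1-p))"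
abbreviation s where "s \<equiv> psqrt K (p * (1-q) * p + (1-p) * q * (1-p))"
abbreviation u where "u \<equiv> polar_symmetry A K (p - (1-q))"
abbreviation v where "v \<equiv> polar_symmetry A K (p - q)"
abbreviation j where "j \<equiv> u * v * p + p * v * u"

lemma p_mem: "p \<in> A" and p_idem: "p * p = p" and q_mem: "q \<in> A" and q_idem: "q * q = q"
  using p_proj q_proj unfolding projections_def by auto

lemma diff_orth_mem: "p - (1-q) \<in> A" and diff_proj_mem: "p - q \<in> A"
  using p_mem q_mem one_mem by (auto intro: diff_mem)

lemma c_eq_sabs: "c = sabs K (p - (1-q))"
  unfolding sabs_def square_diff_orth[OF p_idem q_idem] ..

lemma s_eq_sabs: "s = sabs K (p - q)"
  unfolding sabs_def square_diff[OF p_idem q_idem] ..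

lemma c_pos: "c \<in> K" and c_square: "c * c = (p - (1-q)) * (p - (1-q))"
  using sabs_pos sabs_square diff_orth_mem unfolding c_eq_sabs by auto

lemma s_pos: "s \<in> K" and s_square: "s * s = (p - q) * (p - q)"
  using sabs_pos sabs_square diff_proj_mem unfolding s_eq_sabs by auto

lemma c_mem: "c \<in> A" and s_mem: "s \<in> A"
  using c_pos s_pos pos_mem by auto

lemma c_carrier: "carrier_of A c = 1" and s_carrier: "carrier_of A s = 1"
  using carrier_eq_one_if_square_eq diff_orth_mem diff_proj_mem carrier_diff carrier_diff_orth
    c_mem s_mem c_square s_square by blast+

text \<open>Since \<open>(p - (1-q))\<^sup>2 = 1 - (p - q)\<^sup>2\<close>, both \<open>c\<close> and \<open>s\<close> lie in the bicommutant
  of \<open>(p - q)\<^sup>2\<close>.\<close>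
lemma
  assumes "d \<in> A" and "(p - q) * (p - q) * d = d * ((p - q) * (p - q))"
  shows c_commute: "c * d = d * c" and s_commute: "s * d = d * s"
proof -
  show "c * d = d * c"
    using psqrt_commute[OF square_pos[OF diff_orth_mem]] assms
      square_diff_commute_iff[OF p_idem q_idem]
    unfolding c_eq_sabs sabs_def by blast
  show "s * d = d * s"
    using psqrt_commute[OF square_pos[OF diff_proj_mem]] assms unfolding s_eq_sabs sabs_def by blast
qed

lemma
  shows u_mem: "u \<in> A" and u_square: "u * u = 1"
    and c_mult_u: "c * u = p - (1-q)"
    and u_commute: "u * (p - (1-q)) = (p - (1-q)) * u"
  using polar_symmetry_mem polar_symmetry_square sabs_mult_polar_symmetry
    polar_symmetry_commute[OF _ _ diff_orth_mem] diff_orth_mem carrier_diff_orth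
  unfolding c_eq_sabs by auto

lemma
  shows v_mem: "v \<in> A" and v_square: "v * v = 1"
    and s_mult_v: "s * v = p - q"
    and v_commute: "v * (p - q) = (p - q) * v"
  using polar_symmetry_mem polar_symmetry_square sabs_mult_polar_symmetry
    polar_symmetry_commute[OF _ _ diff_proj_mem] diff_proj_mem carrier_diff
  unfolding s_eq_sabs by auto

lemma square_diff_commute_u: "(p - q) * (p - q) * u = u * ((p - q) * (p - q))"
  using square_diff_commute_iff[OF p_idem q_idem] commute_imp_square_commute[OF u_commute[symmetric]]
  by simp

lemma square_diff_commute_v: "(p - q) * (p - q) * v = v * ((p - q) * (p - q))"
  using commute_imp_square_commute[OF v_commute[symmetric]] .

lemma c_s_commute: "c * s = s * c"
  using c_commute[OF s_mem] by (simp add: s_square[symmetric] mult.assoc)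

lemma c_p_commute: "c * p = p * c" and s_p_commute: "s * p = p * s"
  using c_commute s_commute p_mem square_diff_commute[OF p_idem q_idem] by auto

lemma c_u_commute: "c * u = u * c" and s_u_commute: "s * u = u * s"
  using c_commute[OF u_mem] s_commute[OF u_mem] square_diff_commute_u by auto

lemma c_v_commute: "c * v = v * c" and s_v_commute: "s * v = v * s"
  using c_commute[OF v_mem] s_commute[OF v_mem] square_diff_commute_v by auto

text \<open>\<open>c (u (p - q) + (p - q) u) = (p - (1-q)) (p - q) + (p - q) (p - (1-q)) = 0\<close>.\<close>
lemma u_anticommute: "u * (p - q) = - ((p - q) * u)"
proof -
  have "c * (p - q) = (p - q) * c" using c_commute[OF diff_proj_mem] by (simp add: mult.assoc)
  then have "c * (u * (p - q) + (p - q) * u) = (c * u) * (p - q) + (p - q) * (c * u)"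
    by (simp add: distrib_left mult.assoc[symmetric])
  also have "\<dots> = (p - (1-q)) * (p - q) + (p - q) * (p - (1-q))" unfolding c_mult_u ..
  also have "\<dots> = 0" using diff_orth_diff_anticommute[OF p_idem q_idem] by simp
  finally have "u * (p - q) + (p - q) * u = 0"
    using carrier_eq_oneD[OF c_carrier c_mem jordan_mem[OF u_mem diff_proj_mem]] by blast
  then show ?thesis by (simp add: eq_neg_iff_add_eq_0)
qed

lemma v_anticommute: "v * (p - (1-q)) = - ((p - (1-q)) * v)"
proof -
  have "s * (p - (1-q)) = (p - (1-q)) * s"
    using s_commute[OF diff_orth_mem] square_diff_commute_iff[OF p_idem q_idem]
    by (simp add: mult.assoc)
  then have "s * (v * (p - (1-q)) + (p - (1-q)) * v) = (s * v) * (p - (1-q)) + (p - (1-q)) * (s * v)"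
    by (simp add: distrib_left mult.assoc[symmetric])
  also have "\<dots> = (p - q) * (p - (1-q)) + (p - (1-q)) * (p - q)" unfolding s_mult_v ..
  also have "\<dots> = 0" using diff_orth_diff_anticommute[OF p_idem q_idem] by simp
  finally have "v * (p - (1-q)) + (p - (1-q)) * v = 0"
    using carrier_eq_oneD[OF s_carrier s_mem jordan_mem[OF v_mem diff_orth_mem]] by blast
  then show ?thesis by (simp add: eq_neg_iff_add_eq_0)
qed

lemma u_intertwine: "u * p = q * u"
  using intertwine_of_anticommute u_commute u_anticommute .

lemma v_intertwine: "v * p = (1-q) * v"
  using intertwine_of_anticommute[of v p "1-q"] v_commute v_anticommute by simp

lemma j_mem: "j \<in> A"
proof -
  have "(u + p) * v * (u + p) - u * v * u - p * v * p \<in> A"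
    using u_mem v_mem p_mem by (intro diff_mem triple_mem add_mem)
  then show ?thesis by (simp add: algebra_simps)
qed

lemma j_square: "j * j = 1" and j_exchange: "j * p * j = 1 - p"
  using exchange_symmetry[OF p_idem q_idem u_square v_square u_intertwine v_intertwine] by auto

lemma c_j_commute: "c * j = j * c" and s_j_commute: "s * j = j * s"
  using commute_palindrome c_u_commute c_v_commute c_p_commute s_u_commute s_v_commute s_p_commute
  by blast+

lemma c_s_j: "c * s * j = p * q * (1-p) + (1-p) * q * p"
  using polar_factors_off_diagonal[OF p_idem q_idem c_mult_u s_mult_v c_s_commute c_v_commute
      c_p_commute s_u_commute s_p_commute] .

lemma j_bicommutant: "j \<in> CCset A (p * q * (1-p) + (1-p) * q * p)"
proof -
  have "c * s * j \<in> A"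
    unfolding c_s_j off_diagonal_part[OF p_idem q_idem]
    using p_mem q_mem by (intro diff_mem triple_mem one_mem)
  then show ?thesis
    using symmetry_factor_in_bicommutant[OF c_pos c_carrier s_pos s_carrier j_mem j_square
        c_s_commute c_j_commute s_j_commute] c_s_j by simp
qed

lemma c_square_compress: "c * c * p = p * q * p" "p * (c * c) = p * q * p"
  unfolding c_square using square_diff_orth_compress[OF p_idem q_idem] .

lemma s_square_compress: "s * s * (1-p) = (1-p) * q * (1-p)" "(1-p) * (s * s) = (1-p) * q * (1-p)"
  unfolding s_square using square_diff_compress[OF p_idem q_idem] .

lemma q_decomposition: "q = c * c * p + c * s * j + s * s * (1-p)"
  unfolding c_square_compress s_square_compress c_s_j off_diagonal_part[OF p_idem q_idem]
  by simp

end

theorem theorem7p8: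
  fixes A K :: "'r::real_algebra_1 set" and p q :: 'r
  assumes SA: "synaptic_algebra A K"
    and pP: "p \<in> projections A" and qP: "q \<in> projections A"
    and g1: "is_proj_meet A K p q 0"
    and g2: "is_proj_meet A K p (orth q) 0"
    and g3: "is_proj_meet A K (orth p) q 0"
    and g4: "is_proj_meet A K (orth p) (orth q) 0"
  defines "c \<equiv> psqrt K (p * q * p + orth p * orth q * orth p)"
    and "s \<equiv> psqrt K (p * orth q * p + orth p * q * orth p)"
    and "j \<equiv> polar_symmetry A K (p - orth q) * polar_symmetry A K (p - q) * p
              + p * polar_symmetry A K (p - q) * polar_symmetry A K (p - orth q)"
  shows "q = c * c * p + c * s * j + s * s * orth p
    \<and> p * q * p = c * c * p \<and> c * c * p = p * (c * c)
    \<and> orth p * q * orth p = s * s * orth p \<and> s * s * orth p = orth p * (s * s)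
    \<and> p * q * orth p + orth p * q * p = c * s * j
    \<and> carrier_of A c = 1 \<and> carrier_of A s = 1
    \<and> j \<in> A \<and> j * j = 1 \<and> j * p * j = orth p
    \<and> commutes c s \<and> commutes c j \<and> commutes s j
    \<and> j \<in> CCset A (p * q * orth p + orth p * q * p)"
proof -
  interpret synaptic A K by (rule synaptic.intro[OF SA])
  have orth_qP: "1 - q \<in> projections A"
    using qP diff_mem[OF one_mem] unfolding projections_def by (auto simp: algebra_simps)
  interpret G: generic_position A K p q
  proof
    show "carrier_of A (p - q) = 1"
      using carrier_of_diff_eq_one[OF pP qP g1] g4 unfolding orth_def by simp
    show "carrier_of A (p - (1 - q)) = 1"
      using carrier_of_diff_eq_one[OF pP orth_qP] g2 g3 unfolding orth_def by simp
  qed (fact SA pP qP)+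
  show ?thesis
    unfolding c_def s_def j_def orth_def commutes_def
    using G.q_decomposition G.c_square_compress G.s_square_compress G.c_s_j G.c_carrier
      G.s_carrier G.j_mem G.j_square G.j_exchange G.c_s_commute G.c_j_commute G.s_j_commute
      G.j_bicommutant
    by simp
qed

end
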